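(* Let $F$ be an unsatisfiable CNF formula over variables $X \cup Y \cup Z$ (pairwise disjoint), $X=\{x_1,\ldots,x_n\}$, such that for every truth assignment to $X \cup Y$ the values of the variables in $Z$ are obtained from it by unit propagation in $F$. Let $c_X(F) = \{\gamma \vee \neg a \vee \neg b \mid \gamma \in F\} \cup \{\neg x_i \vee v_i \mid 1\le i\le n\} \cup \{x_i \vee v_i \mid 1\le i\le n\} \cup \{\neg v_1 \vee \cdots \vee \neg v_n \vee a\} \cup \{\neg v_1 \vee \cdots \vee \neg v_n \vee b\}$, where $a,b,v_1,\ldots,v_n$ are new variables. Then, with branching restricted to the variables in $X \cup Y$, there exists a minimum-size DPLL-Mono search tree of $c_X(F)$ consisting of a complete tree over $X$ (every path from the root to an empty subtree contains exactly one node labelled by each variable of $X$) in which every empty subtree is replaced by a tree whose nodes are labelled by variables of $Y$.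
   Context: A CNF formula is a finite set of clauses; the empty clause is unsatisfiable. For a partial assignment $I$ (set of literals), $F|I$ is obtained by deleting clauses containing a literal true under $I$ and deleting false literals from remaining clauses. $Var(F)$ is the set of variables of $F$. A binary tree is empty $()$ or a triple $(x~T_1~T_2)$; its size is its number of nodes. $U(F)$ denotes the result of exhaustively applying unit propagation to $F$ (a unit clause $l$ forces the restriction by $\{l\}$). For a set $B$ of variables, a DPLL-Mono search tree (DMST) of $F$ with branching restricted to $B$ is: $()$ if $U(F)$ contains the empty clause; otherwise $(x~T_1~T_2)$ with $x \in B \cap Var(U(F))$, $T_1$ a DMST of $U(F|\{\neg x\})$ and $T_2$ a DMST of $U(F|\{x\})$, both with branching restricted to $B$. *)

theory Defs
  imports Main
begin

datatype 'a lit = Pos 'a | Neg 'a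

fun var :: "'a lit \<Rightarrow> 'a" where
  "var (Pos x) = x" | "var (Neg x) = x"

fun comp :: "'a lit \<Rightarrow> 'a lit" where
  "comp (Pos x) = Neg x" | "comp (Neg x) = Pos x"

type_synonym 'a clause = "'a lit set"
type_synonym 'a cnf = "'a clause set"

fun lit_true :: "('a \<Rightarrow> bool) \<Rightarrow> 'a lit \<Rightarrow> bool" where
  "lit_true \<alpha> (Pos x) = \<alpha> x" | "lit_true \<alpha> (Neg x) = (\<not> \<alpha> x)"

definition satisfiable :: "'a cnf \<Rightarrow> bool" where
  "satisfiable F \<longleftrightarrow> (\<exists>\<alpha>. \<forall>C\<in>F. \<exists>l\<in>C. lit_true \<alpha> l)"

definition Var :: "'a cnf \<Rightarrow> 'a set" where
  "Var F = var ` (\<Union>F)"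

definition restrict :: "'a cnf \<Rightarrow> 'a lit set \<Rightarrow> 'a cnf" where
  "restrict F I = {C - comp ` I | C. C \<in> F \<and> C \<inter> I = {}}"

definition assign_lits :: "('a \<Rightarrow> bool) \<Rightarrow> 'a set \<Rightarrow> 'a lit set" where
  "assign_lits \<alpha> S = {Pos x | x. x \<in> S \<and> \<alpha> x} \<union> {Neg x | x. x \<in> S \<and> \<not> \<alpha> x}"

definition up_step :: "'a cnf \<Rightarrow> 'a cnf" where
  "up_step F = (if {} \<in> F \<or> \<not> (\<exists>l. {l} \<in> F) then F
                else restrict F {SOME l. {l} \<in> F})"

text \<open>U(F): exhaustive unit propagation. Every effective step removes at least one
  variable, so card (Var F) + 1 iterations reach the fixpoint for finite F.\<close>
definition U :: "'a cnf \<Rightarrow> 'a cnf" where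
  "U F = (up_step ^^ Suc (card (Var F))) F"

inductive up_lit :: "'a cnf \<Rightarrow> 'a lit \<Rightarrow> bool" for F where
  "C \<in> F \<Longrightarrow> l \<in> C \<Longrightarrow> (\<forall>l'\<in>C - {l}. up_lit F (comp l')) \<Longrightarrow> up_lit F l"

datatype 'a btree = E | N 'a "'a btree" "'a btree"

fun tsize :: "'a btree \<Rightarrow> nat" where
  "tsize E = 0" | "tsize (N x l r) = Suc (tsize l + tsize r)"

fun labels :: "'a btree \<Rightarrow> 'a set" where
  "labels E = {}" | "labels (N x l r) = insert x (labels l \<union> labels r)"

inductive is_dmst :: "'a set \<Rightarrow> 'a cnf \<Rightarrow> 'a btree \<Rightarrow> bool" where
  dmst_E: "{} \<in> U F \<Longrightarrow> is_dmst B F E"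
| dmst_N: "{} \<notin> U F \<Longrightarrow> x \<in> B \<inter> Var (U F) \<Longrightarrow>
           is_dmst B (U (restrict (U F) {Neg x})) T1 \<Longrightarrow>
           is_dmst B (U (restrict (U F) {Pos x})) T2 \<Longrightarrow>
           is_dmst B F (N x T1 T2)"

definition min_dmst :: "'a set \<Rightarrow> 'a cnf \<Rightarrow> 'a btree \<Rightarrow> bool" where
  "min_dmst B F T \<longleftrightarrow> is_dmst B F T \<and> (\<forall>T'. is_dmst B F T' \<longrightarrow> tsize T \<le> tsize T')"

inductive complete_then :: "'a set \<Rightarrow> 'a set \<Rightarrow> 'a btree \<Rightarrow> bool" where
  ct_base: "labels T \<subseteq> Y \<Longrightarrow> complete_then {} Y T"
| ct_node: "x \<in> X \<Longrightarrow> complete_then (X - {x}) Y T1 \<Longrightarrow> complete_then (X - {x}) Y T2 \<Longrightarrow>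
            complete_then X Y (N x T1 T2)"

datatype 'a ext = Old 'a | A | B | V nat

fun map_lit :: "('a \<Rightarrow> 'b) \<Rightarrow> 'a lit \<Rightarrow> 'b lit" where
  "map_lit f (Pos x) = Pos (f x)" | "map_lit f (Neg x) = Neg (f x)"

text \<open>X = {xv 1, ..., xv n}; fresh variables a = A, b = B, v_i = V i.\<close>
definition cX :: "'a cnf \<Rightarrow> nat \<Rightarrow> (nat \<Rightarrow> 'a) \<Rightarrow> 'a ext cnf" where
  "cX F n xv =
     {map_lit Old ` \<gamma> \<union> {Neg A, Neg B} | \<gamma>. \<gamma> \<in> F}
   \<union> {{Neg (Old (xv i)), Pos (V i)} | i. i \<in> {1..n}}
   \<union> {{Pos (Old (xv i)), Pos (V i)} | i. i \<in> {1..n}}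
   \<union> {insert (Pos A) {Neg (V i) | i. i \<in> {1..n}}}
   \<union> {insert (Pos B) {Neg (V i) | i. i \<in> {1..n}}}"

end

theory Submission
  imports Defs
begin

(*
  Write H for c_X(F) and restrict it by consistent partial assignments J to X \<union> Y. While some
  x_i \<in> X is unassigned, unit propagation in H|J derives nothing but the v_j of assigned x_j,
  so H|J is not refuted and x_i survives in U(H|J) through the clause \<not>x_i \<or> v_i. Once X is
  assigned, a and b are derived and U(H|J) consists of residues of clauses of F; if no variable
  of X \<union> Y survived, the derived literals would fix Z by the hypothesis on F and satisfy F.
  Hence search trees exist. Compare them with the complete tree over the unassigned part of X
  carrying minimum trees at its leaves: by induction on a search tree, a root labelled in X can
  be moved to the top of the complete tree, and a root labelled y \<in> Y costs at least as much,
  because m(J) \<le> 1 + m(J,\<not>y) + m(J,y) for the minimum size m at every leaf. The complete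
  tree is itself a search tree, hence a minimum one.
*)

definition consistent :: "'a lit set \<Rightarrow> bool" where
  "consistent K \<longleftrightarrow> (\<forall>l\<in>K. comp l \<notin> K)"

lemma comp_comp [simp]: "comp (comp l) = l"
  by (cases l) auto

lemma var_comp [simp]: "var (comp l) = var l"
  by (cases l) auto

lemma comp_neq [simp]: "comp l \<noteq> l"
  by (cases l) auto

lemma comp_in_comp_image [simp]: "comp l \<in> comp ` K \<longleftrightarrow> l \<in> K"
  by (metis comp_comp image_iff)

lemma in_comp_image_iff: "k \<in> comp ` K \<longleftrightarrow> comp k \<in> K"
  by (metis comp_comp comp_in_comp_image)

lemma var_eq_iff: "var l = var k \<longleftrightarrow> l = k \<or> l = comp k"
  by (cases l; cases k) auto

lemma var_eq_conv: "var l = x \<longleftrightarrow> l = Pos x \<or> l = Neg x"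
  by (cases l) auto

lemma notin_if_var_notin: "var l \<notin> var ` K \<Longrightarrow> l \<notin> K \<and> comp l \<notin> K"
  by (metis image_eqI var_comp)

lemma consistent_insert:
  "consistent K \<Longrightarrow> var l \<notin> var ` K \<Longrightarrow> consistent (insert l K)"
  unfolding consistent_def using notin_if_var_notin[of l K] by (force simp: var_eq_iff)

lemma consistent_Un:
  "consistent K \<Longrightarrow> consistent L \<Longrightarrow> var ` K \<inter> var ` L = {} \<Longrightarrow> consistent (K \<union> L)"
  unfolding consistent_def by (metis UnE disjoint_iff image_eqI var_comp)

lemma lit_true_comp [simp]: "lit_true \<alpha> (comp k) \<longleftrightarrow> \<not> lit_true \<alpha> k"
  by (cases k) auto

lemma mem_assign_lits: "k \<in> assign_lits \<alpha> S \<longleftrightarrow> var k \<in> S \<and> lit_true \<alpha> k"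
  by (cases k) (auto simp: assign_lits_def)

definition finite_cnf :: "'a cnf \<Rightarrow> bool" where
  "finite_cnf G \<longleftrightarrow> finite G \<and> (\<forall>C\<in>G. finite C)"

lemma mem_restrict: "C' \<in> restrict G K \<longleftrightarrow> (\<exists>C\<in>G. C \<inter> K = {} \<and> C' = C - comp ` K)"
  unfolding restrict_def by auto

lemma bex_restrict:
  "(\<exists>C'\<in>restrict G I. P C') \<longleftrightarrow> (\<exists>C\<in>G. C \<inter> I = {} \<and> P (C - comp ` I))"
  unfolding mem_restrict Bex_def by blast

lemma restrict_empty [simp]: "restrict G {} = G"
  unfolding restrict_def by auto

lemma finite_cnf_restrict: "finite_cnf G \<Longrightarrow> finite_cnf (restrict G K)"
  unfolding finite_cnf_def restrict_def by auto

lemma finite_Var: "finite_cnf G \<Longrightarrow> finite (Var G)"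
  unfolding finite_cnf_def Var_def by auto

lemma Var_restrict: "Var (restrict G K) \<subseteq> Var G - var ` K"
  unfolding Var_def restrict_def by (fastforce simp: var_eq_iff)

lemma restrict_restrict:
  assumes "\<forall>i\<in>I. comp i \<notin> K"
  shows "restrict (restrict G I) K = restrict G (I \<union> K)"
proof (rule set_eqI)
  fix C'
  have disj: "(C - comp ` I) \<inter> K = {} \<longleftrightarrow> C \<inter> K = {}" for C
    using assms by blast
  have disj_Un: "C \<inter> (I \<union> K) = {} \<longleftrightarrow> C \<inter> I = {} \<and> C \<inter> K = {}" for C :: "'a clause"
    by blast
  have diff_Un: "C - comp ` (I \<union> K) = C - comp ` I - comp ` K" for C
    by blast
  have "C' \<in> restrict (restrict G I) K \<longleftrightarrow>
      (\<exists>C\<in>G. C \<inter> I = {} \<and> (C - comp ` I) \<inter> K = {} \<and> C' = C - comp ` I - comp ` K)"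
    unfolding mem_restrict[of C' "restrict G I" K] by (rule bex_restrict)
  also have "\<dots> \<longleftrightarrow> C' \<in> restrict G (I \<union> K)"
    unfolding mem_restrict disj disj_Un diff_Un conj_assoc ..
  finally show "C' \<in> restrict (restrict G I) K \<longleftrightarrow> C' \<in> restrict G (I \<union> K)" .
qed

lemma restrict_insert:
  assumes "var l \<notin> var ` J"
  shows "restrict (restrict G J) {l} = restrict G (insert l J)"
proof -
  have "\<forall>i\<in>J. comp i \<notin> {l}"
    using assms by (metis image_eqI singletonD var_comp)
  from restrict_restrict[OF this] show ?thesis
    by simp
qed

lemma restrict_unused_var:
  assumes "var l \<notin> Var G"
  shows "restrict G {l} = G"
proof -
  have "l \<notin> C \<and> comp l \<notin> C" if "C \<in> G" for C
    using assms that unfolding Var_def by (metis UnionI image_eqI var_comp)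
  then show ?thesis
    unfolding restrict_def by (auto simp del: comp_comp)
qed

lemma mem_Diff_comp_image:
  "k \<in> C \<Longrightarrow> var k \<notin> var ` J \<Longrightarrow> k \<in> C - comp ` J"
  using notin_if_var_notin[of k J] by (metis DiffI comp_comp image_iff)

lemma mem_restrict_if_disjoint_vars:
  assumes "C \<in> G" "var ` C \<inter> var ` K = {}"
  shows "C \<in> restrict G K"
proof -
  have untouched: "k \<notin> K \<and> comp k \<notin> K" if "k \<in> C" for k
    using assms(2) that by (intro notin_if_var_notin) blast
  then have "C \<inter> K = {}"
    by blast
  moreover have "C - comp ` K = C"
    using untouched in_comp_image_iff by blast
  ultimately show ?thesis
    using assms(1) unfolding mem_restrict by (intro bexI[of _ C]) simp_all
qed

section \<open>Unit resolution\<close>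

definition derived :: "'a cnf \<Rightarrow> 'a lit set" where
  "derived G = {l. up_lit G l}"

definition refuted :: "'a cnf \<Rightarrow> bool" where
  "refuted G \<longleftrightarrow> (\<exists>C\<in>G. \<forall>l\<in>C. up_lit G (comp l))"

lemma up_litI:
  "C \<in> G \<Longrightarrow> l \<in> C \<Longrightarrow> (\<And>l'. l' \<in> C \<Longrightarrow> l' \<noteq> l \<Longrightarrow> up_lit G (comp l')) \<Longrightarrow> up_lit G l"
  by (rule up_lit.intros) auto

lemma up_lit_in_clause: "up_lit G l \<Longrightarrow> \<exists>C\<in>G. l \<in> C"
  by (induction rule: up_lit.induct) auto

lemma up_lit_restrict_var:
  assumes "up_lit (restrict G K) l"
  shows "var l \<notin> var ` K"
proof -
  obtain C where "C \<in> restrict G K" "l \<in> C"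
    using up_lit_in_clause[OF assms] by blast
  then have "var l \<in> Var (restrict G K)"
    unfolding Var_def by blast
  then show ?thesis
    using Var_restrict[of G K] by (meson DiffD2 subsetD)
qed

lemma var_derived_restrict: "var ` K \<inter> var ` derived (restrict G K) = {}"
proof -
  have "var l \<notin> var ` K" if "l \<in> derived (restrict G K)" for l
    using that up_lit_restrict_var unfolding derived_def by simp
  then show ?thesis
    by auto (metis image_eqI)
qed

lemma consistent_derived: "\<not> refuted G \<Longrightarrow> consistent (derived G)"
  unfolding consistent_def derived_def
proof clarsimp
  fix l assume "\<not> refuted G" "up_lit G l" "up_lit G (comp l)"
  from \<open>up_lit G l\<close> obtain C where "C \<in> G" "l \<in> C" "\<forall>l'\<in>C - {l}. up_lit G (comp l')"
    by cases
  with \<open>up_lit G (comp l)\<close> have "C \<in> G" "\<forall>l'\<in>C. up_lit G (comp l')"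
    by blast+
  with \<open>\<not> refuted G\<close> show False
    unfolding refuted_def by blast
qed

lemma up_lit_unrestrict:
  assumes "up_lit (restrict G K) l" and "K \<subseteq> derived G"
  shows "up_lit G l"
  using assms(1)
proof (induction rule: up_lit.induct)
  case (1 C' l)
  then obtain C where C: "C \<in> G" "C \<inter> K = {}" "C' = C - comp ` K"
    by (auto simp: mem_restrict)
  show ?case
  proof (rule up_litI[OF C(1)])
    show "l \<in> C"
      using 1(2) C(3) by blast
    fix l' assume "l' \<in> C" "l' \<noteq> l"
    show "up_lit G (comp l')"
    proof (cases "l' \<in> comp ` K")
      case True
      then show ?thesis
        using assms(2) unfolding derived_def by (metis comp_in_comp_image comp_comp mem_Collect_eq subsetD)
    next
      case False
      then show ?thesis
        using 1(3) C(3) \<open>l' \<in> C\<close> \<open>l' \<noteq> l\<close> by blast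
    qed
  qed
qed

lemma up_lit_restrict_underived:
  assumes "\<forall>k\<in>K. \<not> up_lit G (comp k)" and "up_lit G l"
  shows "l \<in> K \<or> up_lit (restrict G K) l"
  using assms(2)
proof (induction rule: up_lit.induct)
  case (1 C l)
  show ?case
  proof (cases "l \<in> K")
    case False
    have "C \<inter> K = {}"
    proof (rule ccontr)
      assume "C \<inter> K \<noteq> {}"
      then obtain k where "k \<in> C" "k \<in> K" "k \<noteq> l"
        using False by blast
      with 1(3) assms(1) show False
        by blast
    qed
    have "l \<notin> comp ` K"
      using assms(1) up_litI[OF 1(1,2)] 1(3) by (metis DiffI comp_comp imageE singletonD)
    have "up_lit (restrict G K) l"
    proof (rule up_litI)
      show "C - comp ` K \<in> restrict G K"
        using 1(1) \<open>C \<inter> K = {}\<close> by (auto simp: mem_restrict)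
      show "l \<in> C - comp ` K"
        using 1(2) \<open>l \<notin> comp ` K\<close> by blast
      fix l' assume "l' \<in> C - comp ` K" "l' \<noteq> l"
      then have "comp l' \<notin> K"
        by (metis DiffD2 comp_comp image_eqI)
      with 1(3) \<open>l' \<in> C - comp ` K\<close> \<open>l' \<noteq> l\<close> show "up_lit (restrict G K) (comp l')"
        by blast
    qed
    then show ?thesis ..
  qed simp
qed

lemma clause_survives_restrict:
  assumes "consistent K" "C \<in> G" "L \<inter> K = {}"
    and comps: "\<And>l'. l' \<in> C - L \<Longrightarrow> comp l' \<in> K \<or> up_lit (restrict G K) (comp l')"
  shows "C - comp ` K \<in> restrict G K"
    and "\<And>x. x \<in> C - comp ` K - L \<Longrightarrow> up_lit (restrict G K) (comp x)"
proof -
  have "C \<inter> K = {}"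
  proof (rule ccontr)
    assume "C \<inter> K \<noteq> {}"
    then obtain k where k: "k \<in> C - L" "k \<in> K"
      using assms(3) by blast
    from comps[OF k(1)] show False
      using k(2) assms(1) up_lit_restrict_var unfolding consistent_def by fastforce
  qed
  then show "C - comp ` K \<in> restrict G K"
    using assms(2) by (auto simp: mem_restrict)
  fix x assume "x \<in> C - comp ` K - L"
  moreover have "comp x \<notin> K"
    using calculation by (metis DiffD1 DiffD2 comp_comp image_eqI)
  ultimately show "up_lit (restrict G K) (comp x)"
    using comps by blast
qed

lemma up_lit_restrict_derived:
  assumes "K \<subseteq> derived G" "consistent K" "up_lit G l"
  shows "l \<in> K \<or> up_lit (restrict G K) l \<or> refuted (restrict G K)"
  using assms(3)
proof (induction rule: up_lit.induct)
  case (1 C l)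
  show ?case
  proof (rule ccontr)
    assume "\<not> ?case"
    then have l: "l \<notin> K" "\<not> up_lit (restrict G K) l" and nr: "\<not> refuted (restrict G K)"
      by auto
    have lK: "{l} \<inter> K = {}"
      using l(1) by blast
    have "comp l' \<in> K \<or> up_lit (restrict G K) (comp l')" if "l' \<in> C - {l}" for l'
      using 1(3) that nr by blast
    note clause = clause_survives_restrict[OF assms(2) 1(1) lK this]
    show False
    proof (cases "l \<in> comp ` K")
      case True
      then have "\<forall>x\<in>C - comp ` K. up_lit (restrict G K) (comp x)"
        using clause(2) l(1) by blast
      with clause(1) nr show False
        unfolding refuted_def by blast
    next
      case False
      have "up_lit (restrict G K) l"
        by (rule up_litI[OF clause(1)]) (use False 1(2) clause(2) l(1) in blast)+
      with l(2) show False ..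
    qed
  qed
qed

lemma refuted_restrict_derived:
  assumes "K \<subseteq> derived G" "consistent K"
  shows "refuted (restrict G K) \<longleftrightarrow> refuted G"
proof
  assume "refuted (restrict G K)"
  then obtain C' where C': "C' \<in> restrict G K" "\<forall>l\<in>C'. up_lit (restrict G K) (comp l)"
    unfolding refuted_def by blast
  then obtain C where C: "C \<in> G" "C' = C - comp ` K"
    by (auto simp: mem_restrict)
  have "up_lit G (comp l)" if "l \<in> C" for l
  proof (cases "l \<in> comp ` K")
    case True
    then show ?thesis
      using assms(1) unfolding derived_def by (metis comp_in_comp_image comp_comp mem_Collect_eq subsetD)
  next
    case False
    then show ?thesis
      using that C(2) C'(2) up_lit_unrestrict assms(1) by blast
  qed
  with C(1) show "refuted G"
    unfolding refuted_def by blast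
next
  assume "refuted G"
  then obtain C where C: "C \<in> G" "\<forall>l\<in>C. up_lit G (comp l)"
    unfolding refuted_def by blast
  show "refuted (restrict G K)"
  proof (rule ccontr)
    assume nr: "\<not> refuted (restrict G K)"
    have "comp l' \<in> K \<or> up_lit (restrict G K) (comp l')" if "l' \<in> C - {}" for l'
      using up_lit_restrict_derived[OF assms] C(2) that nr by blast
    note clause = clause_survives_restrict[OF assms(2) C(1) Int_empty_left this]
    from clause nr show False
      unfolding refuted_def by blast
  qed
qed

section \<open>Exhaustive unit propagation\<close>

definition up_stable :: "'a cnf \<Rightarrow> bool" where
  "up_stable G \<longleftrightarrow> {} \<in> G \<or> \<not> (\<exists>l. {l} \<in> G)"

lemma up_step_stable: "up_stable G \<Longrightarrow> up_step G = G"
  unfolding up_stable_def up_step_def by auto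

lemma up_step_unit: "\<not> up_stable G \<Longrightarrow> \<exists>l. {l} \<in> G \<and> up_step G = restrict G {l}"
  unfolding up_stable_def up_step_def by (auto intro: someI)

lemma propagate_unit:
  assumes "consistent L" "L \<subseteq> derived G" "{l} \<in> restrict G L"
  shows "restrict (restrict G L) {l} = restrict G (insert l L)"
    and "consistent (insert l L)" and "insert l L \<subseteq> derived G"
proof -
  have "var l \<notin> var ` L"
    using assms(3) Var_restrict[of G L] unfolding Var_def by blast
  then show "restrict (restrict G L) {l} = restrict G (insert l L)"
    and "consistent (insert l L)"
    by (simp_all add: restrict_insert consistent_insert assms(1))
  obtain C where C: "C \<in> G" "{l} = C - comp ` L"
    using assms(3) by (auto simp: mem_restrict)
  have "up_lit G l"
  proof (rule up_litI[OF C(1)])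
    show "l \<in> C"
      using C(2) by blast
    fix l' assume "l' \<in> C" "l' \<noteq> l"
    then have "comp l' \<in> L"
      using C(2) by (metis DiffI comp_in_comp_image comp_comp singleton_iff)
    then show "up_lit G (comp l')"
      using assms(2) unfolding derived_def by blast
  qed
  with assms(2) show "insert l L \<subseteq> derived G"
    unfolding derived_def by blast
qed

lemma up_step_iterate:
  assumes "finite_cnf G"
  shows "\<exists>L. (up_step ^^ k) G = restrict G L \<and> consistent L \<and> L \<subseteq> derived G \<and>
    (up_stable ((up_step ^^ k) G) \<or> card (Var ((up_step ^^ k) G)) + k \<le> card (Var G))"
proof (induction k)
  case 0
  show ?case
    by (intro exI[of _ "{}"]) (simp add: consistent_def)
next
  case (Suc k)
  let ?G = "(up_step ^^ k) G"
  obtain L where L: "?G = restrict G L" "consistent L" "L \<subseteq> derived G"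
    "up_stable ?G \<or> card (Var ?G) + k \<le> card (Var G)"
    using Suc.IH by blast
  show ?case
  proof (cases "up_stable ?G")
    case True
    then show ?thesis
      using L(1-3) by (intro exI[of _ L]) (simp add: up_step_stable)
  next
    case False
    then obtain l where l: "{l} \<in> ?G" "up_step ?G = restrict ?G {l}"
      using up_step_unit by blast
    note step = propagate_unit[OF L(2,3) l(1)[unfolded L(1)]]
    have "Var (restrict ?G {l}) \<subset> Var ?G"
      using Var_restrict[of ?G "{l}"] l(1) unfolding Var_def by blast
    moreover have "finite (Var ?G)"
      using finite_Var finite_cnf_restrict[OF assms] L(1) by metis
    ultimately have "card (Var (restrict ?G {l})) < card (Var ?G)"
      by (rule psubset_card_mono[rotated])
    then show ?thesis
      using L(1,4) False l(2) step by (intro exI[of _ "insert l L"]) simp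
  qed
qed

lemma U_restrict:
  assumes "finite_cnf G"
  obtains L where "U G = restrict G L" "consistent L" "L \<subseteq> derived G" "up_stable (U G)"
  using up_step_iterate[OF assms, of "Suc (card (Var G))"] unfolding U_def by auto

lemma not_up_lit_if_up_stable:
  assumes "up_stable G" "{} \<notin> G"
  shows "\<not> up_lit G l"
proof
  assume "up_lit G l"
  then show False
  proof (induction rule: up_lit.induct)
    case (1 C l)
    then have "C = {l}"
      by blast
    with 1(1) assms show False
      unfolding up_stable_def by blast
  qed
qed

lemma refuted_iff_if_up_stable:
  assumes "up_stable G"
  shows "refuted G \<longleftrightarrow> {} \<in> G"
proof
  assume "refuted G"
  then obtain C where C: "C \<in> G" "\<forall>l\<in>C. up_lit G (comp l)"
    unfolding refuted_def by blast
  show "{} \<in> G"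
  proof (rule ccontr)
    assume "{} \<notin> G"
    with C(2) assms have "C = {}"
      using not_up_lit_if_up_stable by blast
    with C(1) \<open>{} \<notin> G\<close> show False
      by simp
  qed
qed (auto simp: refuted_def)

lemma empty_in_U_iff:
  assumes "finite_cnf G"
  shows "{} \<in> U G \<longleftrightarrow> refuted G"
proof -
  obtain L where L: "U G = restrict G L" "consistent L" "L \<subseteq> derived G" "up_stable (U G)"
    using U_restrict[OF assms] .
  have "refuted G \<longleftrightarrow> refuted (U G)"
    using refuted_restrict_derived[OF L(3,2)] L(1) by simp
  also have "\<dots> \<longleftrightarrow> {} \<in> U G"
    by (rule refuted_iff_if_up_stable[OF L(4)])
  finally show ?thesis ..
qed

(* In particular U G does not depend on the unit clauses chosen by the SOME in up_step. *)
lemma U_eq_restrict_derived: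
  assumes "finite_cnf G" "\<not> refuted G"
  shows "U G = restrict G (derived G)"
proof -
  obtain L where L: "U G = restrict G L" "consistent L" "L \<subseteq> derived G" "up_stable (U G)"
    using U_restrict[OF assms(1)] .
  have "{} \<notin> U G"
    using empty_in_U_iff[OF assms(1)] assms(2) by simp
  have "\<not> refuted (U G)"
    using refuted_restrict_derived[OF L(3,2)] L(1) assms(2) by simp
  have "l \<in> L" if "l \<in> derived G" for l
    using up_lit_restrict_derived[OF L(3,2), of l] that L(1) \<open>\<not> refuted (U G)\<close>
      not_up_lit_if_up_stable[OF L(4) \<open>{} \<notin> U G\<close>]
    unfolding derived_def by auto
  with L(1,3) show ?thesis
    by (metis subsetI subset_antisym)
qed

lemma Var_U: "finite_cnf G \<Longrightarrow> Var (U G) \<subseteq> Var G"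
  by (metis Diff_subset U_restrict Var_restrict subset_trans)

lemma Var_U_restrict: "finite_cnf G \<Longrightarrow> Var (U (restrict G K)) \<subseteq> Var G - var ` K"
  by (rule subset_trans[OF Var_U[OF finite_cnf_restrict] Var_restrict])

lemma finite_cnf_U: "finite_cnf G \<Longrightarrow> finite_cnf (U G)"
  by (metis U_restrict finite_cnf_restrict)

section \<open>DPLL-Mono search trees\<close>

(* Refuted formulas may keep different clauses next to the empty one, hence the guard. *)
definition up_equiv :: "'a cnf \<Rightarrow> 'a cnf \<Rightarrow> bool" where
  "up_equiv G G' \<longleftrightarrow> (refuted G \<longleftrightarrow> refuted G') \<and> (\<not> refuted G \<longrightarrow> U G = U G')"

lemma up_equiv_sym: "up_equiv G G' \<Longrightarrow> up_equiv G' G"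
  unfolding up_equiv_def by auto

lemma up_equiv_trans: "up_equiv G G' \<Longrightarrow> up_equiv G' G'' \<Longrightarrow> up_equiv G G''"
  unfolding up_equiv_def by auto

lemma up_equiv_restrict_derived:
  assumes "finite_cnf G" "K \<subseteq> derived G" "consistent K"
  shows "up_equiv G (restrict G K)"
proof -
  have "U G = U (restrict G K)" if nr: "\<not> refuted G"
  proof -
    have nr': "\<not> refuted (restrict G K)"
      using refuted_restrict_derived[OF assms(2,3)] nr by simp
    have "derived G = K \<union> derived (restrict G K)"
    proof
      show "derived G \<subseteq> K \<union> derived (restrict G K)"
        using up_lit_restrict_derived[OF assms(2,3)] nr' unfolding derived_def by blast
      show "K \<union> derived (restrict G K) \<subseteq> derived G"
        using assms(2) up_lit_unrestrict[OF _ assms(2)] unfolding derived_def by blast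
    qed
    moreover have "\<forall>k\<in>K. comp k \<notin> derived (restrict G K)"
      using up_lit_restrict_var unfolding derived_def by (metis image_eqI mem_Collect_eq var_comp)
    ultimately have "restrict G (derived G) = restrict (restrict G K) (derived (restrict G K))"
      using restrict_restrict by metis
    then show ?thesis
      using U_eq_restrict_derived[OF assms(1) nr]
        U_eq_restrict_derived[OF finite_cnf_restrict[OF assms(1)] nr'] by simp
  qed
  then show ?thesis
    using refuted_restrict_derived[OF assms(2,3)] unfolding up_equiv_def by auto
qed

lemma up_equiv_U: "finite_cnf G \<Longrightarrow> up_equiv G (U G)"
  by (metis U_restrict up_equiv_restrict_derived)

lemma up_equiv_restrict_U:
  assumes "finite_cnf G" "\<not> refuted G" "var l \<notin> var ` derived G"
  shows "up_equiv (restrict G {l}) (restrict (U G) {l})"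
proof -
  let ?D = "derived G"
  have D_l: "\<forall>d\<in>?D. comp d \<notin> {l}" and l_D: "\<forall>k\<in>{l}. comp k \<notin> ?D"
    using assms(3) by (metis image_eqI singletonD var_comp)+
  have "restrict (U G) {l} = restrict G (?D \<union> {l})"
    using U_eq_restrict_derived[OF assms(1,2)] restrict_restrict[OF D_l] by simp
  also have "\<dots> = restrict (restrict G {l}) ?D"
    using restrict_restrict[OF l_D] by (simp add: Un_commute)
  finally have eq: "restrict (U G) {l} = restrict (restrict G {l}) ?D" .
  have "?D \<subseteq> derived (restrict G {l})"
  proof
    fix d assume "d \<in> ?D"
    moreover from this have "d \<noteq> l"
      using assms(3) by blast
    moreover have "\<forall>k\<in>{l}. \<not> up_lit G (comp k)"
      using l_D unfolding derived_def by simp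
    ultimately show "d \<in> derived (restrict G {l})"
      using up_lit_restrict_underived unfolding derived_def by blast
  qed
  from up_equiv_restrict_derived[OF finite_cnf_restrict[OF assms(1)] this consistent_derived[OF assms(2)]]
  show ?thesis
    unfolding eq .
qed

lemma up_equiv_restrict_unused:
  assumes "finite_cnf G" "\<not> refuted G" "x \<notin> Var (U G)"
  obtains l where "var l = x" "up_equiv G (restrict G {l})"
proof (cases "x \<in> var ` derived G")
  case True
  then obtain l where l: "l \<in> derived G" "var l = x"
    by blast
  have "up_equiv G (restrict G {l})"
    by (rule up_equiv_restrict_derived[OF assms(1)]) (use l(1) in \<open>auto simp: consistent_def\<close>)
  with l(2) show ?thesis
    using that by blast
next
  case False
  have "restrict (U G) {Pos x} = U G"
    by (rule restrict_unused_var) (simp add: assms(3))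
  then have "up_equiv (restrict G {Pos x}) (U G)"
    using up_equiv_restrict_U[OF assms(1,2), of "Pos x"] False by simp
  then have "up_equiv G (restrict G {Pos x})"
    using up_equiv_U[OF assms(1)] up_equiv_sym up_equiv_trans by metis
  then show ?thesis
    using that[of "Pos x"] by simp
qed

lemma up_equiv_child:
  assumes "finite_cnf G" "\<not> refuted G" "var l \<in> Var (U G)"
  shows "up_equiv (restrict G {l}) (U (restrict (U G) {l}))"
proof -
  have "var l \<notin> var ` derived G"
    using assms(3) Var_restrict[of G "derived G"] U_eq_restrict_derived[OF assms(1,2)] by auto
  then have "up_equiv (restrict G {l}) (restrict (U G) {l})"
    by (rule up_equiv_restrict_U[OF assms(1,2)])
  moreover have "up_equiv (restrict (U G) {l}) (U (restrict (U G) {l}))"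
    by (rule up_equiv_U[OF finite_cnf_restrict[OF finite_cnf_U[OF assms(1)]]])
  ultimately show ?thesis
    by (rule up_equiv_trans)
qed

lemma Var_U_child:
  assumes "finite_cnf G" "\<not> refuted G" "var l \<in> Var (U G)" "\<not> refuted (restrict G {l})"
  shows "Var (U (restrict G {l})) \<subseteq> Var (U G) - {var l}"
proof -
  have fin: "finite_cnf (restrict (U G) {l})"
    using assms(1) by (simp add: finite_cnf_restrict finite_cnf_U)
  have "U (restrict G {l}) = U (U (restrict (U G) {l}))"
    using up_equiv_child[OF assms(1-3)] assms(4) unfolding up_equiv_def by blast
  then have "Var (U (restrict G {l})) \<subseteq> Var (U (restrict (U G) {l}))"
    using Var_U[OF finite_cnf_U[OF fin]] by simp
  also have "\<dots> \<subseteq> Var (restrict (U G) {l})"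
    by (rule Var_U[OF fin])
  also have "\<dots> \<subseteq> Var (U G) - var ` {l}"
    by (rule Var_restrict)
  finally show ?thesis
    by simp
qed

lemma is_dmst_up_equiv:
  assumes "finite_cnf G" "finite_cnf G'" "up_equiv G G'" "is_dmst Bv G T"
  shows "is_dmst Bv G' T"
  using assms(4)
proof cases
  case dmst_E
  then show ?thesis
    using assms(1-3) empty_in_U_iff unfolding up_equiv_def by (metis is_dmst.dmst_E)
next
  case (dmst_N x T1 T2)
  then have "U G = U G'"
    using assms(1,3) empty_in_U_iff unfolding up_equiv_def by metis
  with dmst_N show ?thesis
    by (auto intro: is_dmst.dmst_N)
qed

lemma is_dmst_E_iff:
  assumes "finite_cnf G"
  shows "is_dmst Bv G E \<longleftrightarrow> refuted G"
  using empty_in_U_iff[OF assms] by (auto elim: is_dmst.cases intro: dmst_E)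

lemma is_dmst_N_iff:
  assumes "finite_cnf G"
  shows "is_dmst Bv G (N x T1 T2) \<longleftrightarrow> \<not> refuted G \<and> x \<in> Bv \<inter> Var (U G) \<and>
    is_dmst Bv (restrict G {Neg x}) T1 \<and> is_dmst Bv (restrict G {Pos x}) T2"
proof -
  have child: "is_dmst Bv (restrict G {l}) T \<longleftrightarrow> is_dmst Bv (U (restrict (U G) {l})) T"
    if "\<not> refuted G" "var l \<in> Var (U G)" for l T
  proof -
    have "up_equiv (restrict G {l}) (U (restrict (U G) {l}))"
      by (rule up_equiv_child[OF assms that])
    moreover have "finite_cnf (restrict G {l})" "finite_cnf (U (restrict (U G) {l}))"
      using assms by (simp_all add: finite_cnf_restrict finite_cnf_U)
    ultimately show ?thesis
      using is_dmst_up_equiv up_equiv_sym by metis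
  qed
  show ?thesis
  proof
    assume "is_dmst Bv G (N x T1 T2)"
    then have nr: "\<not> refuted G" and x: "x \<in> Bv \<inter> Var (U G)"
      and "is_dmst Bv (U (restrict (U G) {Neg x})) T1" "is_dmst Bv (U (restrict (U G) {Pos x})) T2"
      by (cases, simp add: empty_in_U_iff[OF assms])+
    then show "\<not> refuted G \<and> x \<in> Bv \<inter> Var (U G) \<and>
      is_dmst Bv (restrict G {Neg x}) T1 \<and> is_dmst Bv (restrict G {Pos x}) T2"
      using child[OF nr, of "Neg x"] child[OF nr, of "Pos x"] by simp
  next
    assume "\<not> refuted G \<and> x \<in> Bv \<inter> Var (U G) \<and>
      is_dmst Bv (restrict G {Neg x}) T1 \<and> is_dmst Bv (restrict G {Pos x}) T2"
    moreover from this have nr: "\<not> refuted G" and x: "x \<in> Bv \<inter> Var (U G)"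
      by simp_all
    ultimately have "is_dmst Bv (U (restrict (U G) {Neg x})) T1"
      "is_dmst Bv (U (restrict (U G) {Pos x})) T2"
      using child[OF nr, of "Neg x" T1] child[OF nr, of "Pos x" T2] by simp_all
    with x nr empty_in_U_iff[OF assms] show "is_dmst Bv G (N x T1 T2)"
      by (simp add: dmst_N)
  qed
qed

lemma labels_dmst: "finite_cnf G \<Longrightarrow> is_dmst Bv G T \<Longrightarrow> labels T \<subseteq> Bv \<inter> Var G"
proof (induction T arbitrary: G)
  case (N x T1 T2)
  then have x: "x \<in> Bv \<inter> Var (U G)"
    and T1: "is_dmst Bv (restrict G {Neg x}) T1" and T2: "is_dmst Bv (restrict G {Pos x}) T2"
    by (simp_all add: is_dmst_N_iff)
  have Var_child: "Bv \<inter> Var (restrict G {l}) \<subseteq> Bv \<inter> Var G" for l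
    using Var_restrict[of G "{l}"] by blast
  have "labels T1 \<subseteq> Bv \<inter> Var G" "labels T2 \<subseteq> Bv \<inter> Var G"
    using subset_trans[OF N.IH(1)[OF finite_cnf_restrict[OF N.prems(1)] T1] Var_child]
      subset_trans[OF N.IH(2)[OF finite_cnf_restrict[OF N.prems(1)] T2] Var_child] .
  with x Var_U[OF N.prems(1)] show ?case
    by auto
qed simp

lemma min_dmst_exists: "is_dmst Bv G T \<Longrightarrow> \<exists>T. min_dmst Bv G T"
  unfolding min_dmst_def using ex_has_least_nat[of "is_dmst Bv G" T tsize] by blast

fun complete_tree :: "('v lit set \<Rightarrow> 'v btree) \<Rightarrow> 'v lit set \<Rightarrow> 'v list \<Rightarrow> 'v btree" where
  "complete_tree t J [] = t J"
| "complete_tree t J (x # xs) =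
     N x (complete_tree t (insert (Neg x) J) xs) (complete_tree t (insert (Pos x) J) xs)"

lemma tsize_complete_tree_move_front:
  "x \<in> set xs \<Longrightarrow> distinct xs \<Longrightarrow>
    tsize (complete_tree t J xs) = tsize (complete_tree t J (x # remove1 x xs))"
proof (induction xs arbitrary: J)
  case (Cons y ys)
  show ?case
  proof (cases "x = y")
    case False
    then have "x \<in> set ys" "distinct ys"
      using Cons.prems by auto
    with False Cons.IH show ?thesis
      by (simp add: insert_commute)
  qed simp
qed simp

lemma tsize_complete_tree_perm:
  assumes "distinct xs" "distinct ys" "set xs = set ys"
  shows "tsize (complete_tree t J xs) = tsize (complete_tree t J ys)"
  using assms
proof (induction xs arbitrary: J ys)
  case (Cons x xs)
  have x: "x \<in> set ys"
    using Cons.prems(3) by auto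
  have "set (remove1 x ys) = set ys - {x}"
    using Cons.prems(2) by (rule set_remove1_eq)
  also have "\<dots> = set xs"
    using Cons.prems(1) unfolding Cons.prems(3)[symmetric] by simp
  finally have "set xs = set (remove1 x ys)" ..
  then have "tsize (complete_tree t L xs) = tsize (complete_tree t L (remove1 x ys))" for L
    using Cons.IH[of "remove1 x ys" L] Cons.prems(1,2) by simp
  then show ?case
    using tsize_complete_tree_move_front[OF x Cons.prems(2)] by simp
qed simp

section \<open>The formula $c_X(F)$\<close>

lemma var_map_Old [simp]: "var (map_lit Old k) = Old (var k)"
  by (cases k) auto

lemma comp_map_Old [simp]: "comp (map_lit Old k) = map_lit Old (comp k)"
  by (cases k) auto

lemma not_range_Old [simp]: "A \<notin> range Old" "B \<notin> range Old" "V i \<notin> range Old"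
  by auto

lemma mem_cX:
  "C \<in> cX F n xv \<longleftrightarrow>
     (\<exists>\<gamma>\<in>F. C = map_lit Old ` \<gamma> \<union> {Neg A, Neg B})
   \<or> (\<exists>i\<in>{1..n}. \<exists>l. var l = Old (xv i) \<and> C = {l, Pos (V i)})
   \<or> (\<exists>ab\<in>{A, B}. C = insert (Pos ab) ((\<lambda>i. Neg (V i)) ` {1..n}))"
  unfolding cX_def var_eq_conv by blast

lemma finite_cnf_cX:
  assumes "finite F" "\<forall>C\<in>F. finite C"
  shows "finite_cnf (cX F n xv)"
proof -
  have "finite (cX F n xv)"
    unfolding cX_def Setcompr_eq_image using assms(1) by simp
  moreover have "finite C" if "C \<in> cX F n xv" for C
    using that assms(2) unfolding mem_cX by auto
  ultimately show ?thesis
    unfolding finite_cnf_def by blast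
qed

definition old_assignment :: "'a ext lit set \<Rightarrow> 'a \<Rightarrow> bool" where
  "old_assignment K w \<longleftrightarrow> Pos (Old w) \<in> K"

lemma lit_true_old_assignment:
  "consistent K \<Longrightarrow> map_lit Old k \<in> K \<Longrightarrow> lit_true (old_assignment K) k"
  unfolding consistent_def old_assignment_def by (cases k) force+

locale cX_base =
  fixes F :: "'a cnf" and X Y Z :: "'a set" and n :: nat and xv :: "nat \<Rightarrow> 'a"
  assumes finite_F: "finite F" and finite_clauses: "\<forall>C\<in>F. finite C"
    and Var_F: "Var F \<subseteq> X \<union> Y \<union> Z"
    and X_Y: "X \<inter> Y = {}" and X_Z: "X \<inter> Z = {}" and Y_Z: "Y \<inter> Z = {}"
    and X_eq: "X = xv ` {1..n}"
    and Z_forced: "\<forall>\<alpha>. \<forall>z\<in>Z. up_lit (restrict F (assign_lits \<alpha> (X \<union> Y))) (Pos z)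
                   \<or> up_lit (restrict F (assign_lits \<alpha> (X \<union> Y))) (Neg z)"
begin

abbreviation H :: "'a ext cnf" where
  "H \<equiv> cX F n xv"

definition admissible :: "'a ext lit set \<Rightarrow> bool" where
  "admissible J \<longleftrightarrow> consistent J \<and> var ` J \<subseteq> Old ` (X \<union> Y)"

definition unassigned :: "'a ext lit set \<Rightarrow> 'a set" where
  "unassigned J = {x \<in> X. Old x \<notin> var ` J}"

lemma finite_cnf_H: "finite_cnf H"
  using finite_cnf_cX finite_F finite_clauses by blast

lemma admissible_insert:
  "admissible J \<Longrightarrow> var l \<in> Old ` (X \<union> Y) \<Longrightarrow> var l \<notin> var ` J \<Longrightarrow> admissible (insert l J)"
  unfolding admissible_def by (simp add: consistent_insert)

lemma unassigned_insert: "unassigned (insert l J) = {x \<in> unassigned J. Old x \<noteq> var l}"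
  unfolding unassigned_def by auto

lemma vars_admissible: "admissible J \<Longrightarrow> var ` J \<subseteq> range Old"
  unfolding admissible_def by blast

lemma up_lit_partial:
  assumes J: "admissible J" and x: "x \<in> unassigned J" and "up_lit (restrict H J) l"
  shows "\<exists>i\<in>{1..n}. l = Pos (V i) \<and> Old (xv i) \<in> var ` J"
  using assms(3)
proof (induction rule: up_lit.induct)
  case (1 C l)
  from 1(1) obtain C0 where C0: "C0 \<in> H" "C0 \<inter> J = {}" "C = C0 - comp ` J"
    by (auto simp: mem_restrict)
  have others: "\<exists>i\<in>{1..n}. l' = Neg (V i) \<and> Old (xv i) \<in> var ` J" if "l' \<in> C" "l' \<noteq> l" for l'
    using 1(3) that by (metis DiffI comp.simps(1) comp_comp singletonD)
  have kept: "k \<in> C" if "k \<in> C0" "var k \<notin> var ` J" for k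
    using mem_Diff_comp_image[OF that] C0(3) by simp
  have non_Old: "k \<in> C" if "k \<in> C0" "var k \<notin> range Old" for k
    using kept[OF that(1)] that(2) vars_admissible[OF J] by blast
  from C0(1) show ?case
    unfolding mem_cX
  proof (elim disjE bexE exE conjE)
    fix \<gamma> assume "C0 = map_lit Old ` \<gamma> \<union> {Neg A, Neg B}"
    then have "Neg A \<in> C" "Neg B \<in> C"
      using non_Old[of "Neg A"] non_Old[of "Neg B"] by auto
    then show ?thesis
      using others[of "Neg A"] others[of "Neg B"] by auto
  next
    fix i k assume i: "i \<in> {1..n}" and k: "var k = Old (xv i)" "C0 = {k, Pos (V i)}"
    then have "Pos (V i) \<in> C"
      using non_Old by auto
    then have l: "l = Pos (V i)"
      using others by fastforce
    have "Old (xv i) \<in> var ` J"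
    proof (rule ccontr)
      assume "Old (xv i) \<notin> var ` J"
      then have "k \<in> C"
        using kept k by simp
      with others[of k] l k(1) show False
        by (cases k) auto
    qed
    with i l show ?thesis
      by blast
  next
    fix ab assume ab: "ab \<in> {A, B}" "C0 = insert (Pos ab) ((\<lambda>i. Neg (V i)) ` {1..n})"
    then have "Pos ab \<in> C"
      using non_Old by auto
    then have l: "l = Pos ab"
      using others by fastforce
    obtain i where i: "i \<in> {1..n}" "x = xv i" "Old x \<notin> var ` J"
      using x X_eq unfolding unassigned_def by blast
    then have "Neg (V i) \<in> C"
      using non_Old ab by auto
    with others[of "Neg (V i)"] l ab(1) i show ?thesis
      by auto
  qed
qed

lemma not_refuted_partial:
  assumes J: "admissible J" and x: "x \<in> unassigned J"
  shows "\<not> refuted (restrict H J)"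
proof
  assume "refuted (restrict H J)"
  then obtain C where C: "C \<in> restrict H J" "\<forall>l\<in>C. up_lit (restrict H J) (comp l)"
    unfolding refuted_def by blast
  then have Neg_V: "\<forall>l\<in>C. \<exists>i. l = Neg (V i)"
    using up_lit_partial[OF J x] by (metis comp.simps(1) comp_comp)
  from C(1) obtain C0 where C0: "C0 \<in> H" "C0 \<inter> J = {}" "C = C0 - comp ` J"
    by (auto simp: mem_restrict)
  have non_Old: "k \<in> C" if "k \<in> C0" "var k \<notin> range Old" for k
    using mem_Diff_comp_image[OF that(1)] that(2) vars_admissible[OF J] C0(3)
    by blast
  from C0(1) show False
    unfolding mem_cX
  proof (elim disjE bexE exE conjE)
    fix \<gamma> assume "C0 = map_lit Old ` \<gamma> \<union> {Neg A, Neg B}"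
    with non_Old Neg_V show False
      by fastforce
  next
    fix i k assume "C0 = {k, Pos (V i)}"
    with non_Old Neg_V show False
      by fastforce
  next
    fix ab assume "ab \<in> {A, B}" "C0 = insert (Pos ab) ((\<lambda>i. Neg (V i)) ` {1..n})"
    with non_Old Neg_V show False
      by fastforce
  qed
qed

lemma unassigned_in_Var_U:
  assumes J: "admissible J" and x: "x \<in> unassigned J"
  shows "Old x \<in> Var (U (restrict H J))"
proof -
  let ?D = "derived (restrict H J)"
  obtain i where i: "i \<in> {1..n}" "x = xv i" and x_J: "Old x \<notin> var ` J"
    using x X_eq unfolding unassigned_def by blast
  let ?C = "{Neg (Old x), Pos (V i)}"
  have "var (Neg (Old x)) = Old (xv i)"
    using i(2) by simp
  with i(1) have "?C \<in> H"
    unfolding mem_cX by blast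
  moreover have "var ` ?C \<inter> var ` J = {}"
    using x_J vars_admissible[OF J] by auto
  ultimately have "?C \<in> restrict H J"
    by (rule mem_restrict_if_disjoint_vars)
  moreover have "var ` ?C \<inter> var ` ?D = {}"
    using up_lit_partial[OF J x] i x_J unfolding derived_def by fastforce
  ultimately have "?C \<in> restrict (restrict H J) ?D"
    by (rule mem_restrict_if_disjoint_vars)
  then have "?C \<in> U (restrict H J)"
    using U_eq_restrict_derived[OF finite_cnf_restrict[OF finite_cnf_H] not_refuted_partial[OF J x]]
    by simp
  then show ?thesis
    unfolding Var_def by force
qed

lemma up_lit_V:
  assumes J: "admissible J" and i: "i \<in> {1..n}" and "Old (xv i) \<in> var ` J"
  shows "up_lit (restrict H J) (Pos (V i))"
proof -
  obtain l where l: "l \<in> J" "var l = Old (xv i)"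
    using assms(3) by (metis imageE)
  let ?C = "{comp l, Pos (V i)}"
  have "var (comp l) = Old (xv i)"
    using l(2) by simp
  with i have "?C \<in> H"
    unfolding mem_cX by blast
  moreover have "comp l \<notin> J"
    using J l(1) unfolding admissible_def consistent_def by blast
  moreover have "Pos (V i) \<notin> J" "Pos (V i) \<notin> comp ` J"
    using notin_if_var_notin[of "Pos (V i)" J] vars_admissible[OF J]
    by (auto simp: in_comp_image_iff)
  moreover have "comp l \<in> comp ` J"
    using l(1) by blast
  ultimately have "{Pos (V i)} \<in> restrict H J"
    unfolding mem_restrict by (intro bexI[of _ ?C]) auto
  then show ?thesis
    by (rule up_litI) auto
qed

lemma up_lit_A_B:
  assumes J: "admissible J" and total: "unassigned J = {}" and ab: "ab \<in> {A, B}"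
  shows "up_lit (restrict H J) (Pos ab)"
proof -
  let ?C = "insert (Pos ab) ((\<lambda>i. Neg (V i)) ` {1..n})"
  have "?C \<in> H"
    using ab unfolding mem_cX by blast
  moreover have "var ` ?C \<inter> var ` J = {}"
    using ab vars_admissible[OF J] by auto
  ultimately have C: "?C \<in> restrict H J"
    by (rule mem_restrict_if_disjoint_vars)
  show ?thesis
  proof (rule up_litI[OF C])
    fix l' assume "l' \<in> ?C" "l' \<noteq> Pos ab"
    then obtain i where i: "i \<in> {1..n}" "l' = Neg (V i)"
      by blast
    then have "Old (xv i) \<in> var ` J"
      using total X_eq unfolding unassigned_def by blast
    with up_lit_V[OF J i(1)] i(2) show "up_lit (restrict H J) (comp l')"
      by simp
  qed simp
qed

definition propagated :: "'a ext lit set \<Rightarrow> 'a ext lit set" where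
  "propagated J = J \<union> derived (restrict H J)"

lemma consistent_propagated:
  assumes "admissible J" "\<not> refuted (restrict H J)"
  shows "consistent (propagated J)"
proof -
  show ?thesis
    unfolding propagated_def
    using assms consistent_derived consistent_Un var_derived_restrict unfolding admissible_def
    by metis
qed

lemma U_eq_restrict_propagated:
  assumes "\<not> refuted (restrict H J)"
  shows "U (restrict H J) = restrict H (propagated J)"
proof -
  have "\<forall>j\<in>J. comp j \<notin> derived (restrict H J)"
    using var_derived_restrict[of J H] by (auto dest: notin_if_var_notin)
  then show ?thesis
    unfolding propagated_def
    using U_eq_restrict_derived[OF finite_cnf_restrict[OF finite_cnf_H] assms] restrict_restrict
    by metis
qed

lemma A_B_propagated:
  "admissible J \<Longrightarrow> unassigned J = {} \<Longrightarrow> Pos A \<in> propagated J \<and> Pos B \<in> propagated J"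
  unfolding propagated_def derived_def using up_lit_A_B by blast

lemma residual_clause_in_U:
  assumes J: "admissible J" and total: "unassigned J = {}" and nr: "\<not> refuted (restrict H J)"
    and \<gamma>: "\<gamma> \<in> F" and false: "\<forall>k\<in>\<gamma>. map_lit Old k \<notin> propagated J"
  shows "map_lit Old ` {k \<in> \<gamma>. Old (var k) \<notin> var ` propagated J} \<in> U (restrict H J)"
proof -
  let ?K = "propagated J"
  let ?C = "map_lit Old ` \<gamma> \<union> {Neg A, Neg B}"
  have K: "consistent ?K" "Pos A \<in> ?K" "Pos B \<in> ?K"
    using consistent_propagated[OF J nr] A_B_propagated[OF J total] by blast+
  have "?C \<in> H"
    using \<gamma> unfolding mem_cX by blast
  moreover have "?C \<inter> ?K = {}"
    using false K(1) K(2,3)[THEN consistent_def[THEN iffD1, OF K(1), rule_format]] by auto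
  moreover have "?C - comp ` ?K = map_lit Old ` {k \<in> \<gamma>. Old (var k) \<notin> var ` ?K}"
  proof -
    have Old_comp: "map_lit Old k \<in> comp ` ?K \<longleftrightarrow> Old (var k) \<in> var ` ?K" if "k \<in> \<gamma>" for k
      unfolding in_comp_image_iff
    proof
      assume "comp (map_lit Old k) \<in> ?K"
      then show "Old (var k) \<in> var ` ?K"
        by (metis image_eqI var_comp var_map_Old)
    next
      assume "Old (var k) \<in> var ` ?K"
      then obtain j where j: "j \<in> ?K" "var j = var (map_lit Old k)"
        by (metis imageE var_map_Old)
      then have "j = map_lit Old k \<or> j = comp (map_lit Old k)"
        by (cases j; cases k) auto
      with false that j(1) show "comp (map_lit Old k) \<in> ?K"
        by blast
    qed
    have "{Neg A, Neg B} \<subseteq> comp ` ?K"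
      using K(2,3) by (simp add: in_comp_image_iff)
    then have "?C - comp ` ?K = map_lit Old ` \<gamma> - comp ` ?K"
      by (simp add: Un_Diff)
    also have "\<dots> = map_lit Old ` {k \<in> \<gamma>. map_lit Old k \<notin> comp ` ?K}"
      by auto
    also have "{k \<in> \<gamma>. map_lit Old k \<notin> comp ` ?K} = {k \<in> \<gamma>. Old (var k) \<notin> var ` ?K}"
      using Old_comp by blast
    finally show ?thesis .
  qed
  ultimately have "\<exists>C\<in>H. C \<inter> ?K = {} \<and>
      map_lit Old ` {k \<in> \<gamma>. Old (var k) \<notin> var ` ?K} = C - comp ` ?K"
    by (intro bexI[of _ ?C]) simp_all
  then show ?thesis
    unfolding U_eq_restrict_propagated[OF nr] mem_restrict .
qed

(*
  U(H|J) has neither an empty nor a unit clause and, by assumption, no variable of X \<union> Y. So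
  every clause of F not satisfied by propagated J leaves in it a residue of at least two
  unassigned Z-literals, unit propagation in F under the assignment read off propagated J
  derives nothing new, and propagated J fixes Z and satisfies F.
*)
context
  fixes J :: "'a ext lit set"
  assumes J: "admissible J" and total: "unassigned J = {}" and nr: "\<not> refuted (restrict H J)"
    and no_branch_var: "Old ` (X \<union> Y) \<inter> Var (U (restrict H J)) = {}"
begin

lemma residual_Z_literals:
  assumes \<gamma>: "\<gamma> \<in> F" and false: "\<forall>k\<in>\<gamma>. map_lit Old k \<notin> propagated J"
  obtains k1 k2 where "k1 \<in> \<gamma>" "k2 \<in> \<gamma>" "k1 \<noteq> k2"
    "\<And>k. k \<in> {k1, k2} \<Longrightarrow> var k \<in> Z \<and> Old (var k) \<notin> var ` propagated J"
proof -
  let ?R = "{k \<in> \<gamma>. Old (var k) \<notin> var ` propagated J}"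
  have R: "map_lit Old ` ?R \<in> U (restrict H J)"
    by (rule residual_clause_in_U[OF J total nr \<gamma> false])
  have stable: "up_stable (U (restrict H J))"
    using U_restrict[OF finite_cnf_restrict[OF finite_cnf_H]] by blast
  have no_empty: "{} \<notin> U (restrict H J)"
    using empty_in_U_iff[OF finite_cnf_restrict[OF finite_cnf_H]] nr by blast
  have "map_lit Old ` ?R \<noteq> {}"
    using R no_empty by metis
  then obtain k1 where k1: "k1 \<in> ?R"
    by blast
  have "map_lit Old ` ?R \<noteq> {map_lit Old k1}"
    using R stable no_empty unfolding up_stable_def by metis
  then have "?R \<noteq> {k1}"
    by auto
  with k1 obtain k2 where k2: "k2 \<in> ?R" "k1 \<noteq> k2"
    by blast
  have "var k \<in> Z" if "k \<in> ?R" for k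
  proof -
    have "var (map_lit Old k) \<in> Var (U (restrict H J))"
      unfolding Var_def using R that by (intro imageI UnionI) auto
    with no_branch_var have "var k \<notin> X \<union> Y"
      by auto
    moreover have "var k \<in> Var F"
      using that \<gamma> unfolding Var_def by blast
    ultimately show ?thesis
      using Var_F by blast
  qed
  with k1 k2 show thesis
    using that by blast
qed

lemma up_lit_Old_propagated:
  assumes "up_lit (restrict F (assign_lits (old_assignment (propagated J)) (X \<union> Y))) l"
  shows "map_lit Old l \<in> propagated J"
  using assms
proof (induction rule: up_lit.induct)
  case (1 C' l)
  let ?K = "propagated J"
  let ?I = "assign_lits (old_assignment ?K) (X \<union> Y)"
  have K: "consistent ?K"
    by (rule consistent_propagated[OF J nr])
  from 1(1) obtain \<gamma> where \<gamma>: "\<gamma> \<in> F" "\<gamma> \<inter> ?I = {}" "C' = \<gamma> - comp ` ?I"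
    by (auto simp: mem_restrict)
  have IH: "map_lit Old (comp l') \<in> ?K" if "l' \<in> C'" "l' \<noteq> l" for l'
    using 1(3) that by simp
  have kept: "k \<in> C'" if "k \<in> \<gamma>" "var k \<notin> X \<union> Y" for k
    using that \<gamma>(3) by (simp add: in_comp_image_iff mem_assign_lits)
  show ?case
  proof (rule ccontr)
    assume l: "map_lit Old l \<notin> ?K"
    have "map_lit Old k \<notin> ?K" if k: "k \<in> \<gamma>" for k
    proof
      assume Old_k: "map_lit Old k \<in> ?K"
      show False
      proof (cases "var k \<in> X \<union> Y")
        case True
        then have "k \<in> ?I"
          using lit_true_old_assignment[OF K Old_k] by (simp add: mem_assign_lits)
        with \<gamma>(2) k show False
          by blast
      next
        case False
        with kept k l Old_k have "k \<in> C'" "k \<noteq> l"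
          by auto
        with IH Old_k K show False
          unfolding consistent_def by fastforce
      qed
    qed
    then obtain k1 k2 where k: "k1 \<in> \<gamma>" "k2 \<in> \<gamma>" "k1 \<noteq> k2"
      "\<And>k. k \<in> {k1, k2} \<Longrightarrow> var k \<in> Z \<and> Old (var k) \<notin> var ` ?K"
      using residual_Z_literals[OF \<gamma>(1)] by blast
    then obtain k where "k \<in> \<gamma>" "k \<noteq> l" "var k \<in> Z" "Old (var k) \<notin> var ` ?K"
      by (metis insert_iff)
    moreover from this have "k \<in> C'"
      using kept X_Z Y_Z by blast
    ultimately show False
      using IH by (metis image_eqI var_comp var_map_Old)
  qed
qed

lemma satisfiable_if_no_branch_var: "satisfiable F"
proof -
  let ?K = "propagated J"
  let ?\<alpha> = "old_assignment ?K"
  have K: "consistent ?K"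
    by (rule consistent_propagated[OF J nr])
  have Z_assigned: "Old z \<in> var ` ?K" if "z \<in> Z" for z
  proof -
    have "up_lit (restrict F (assign_lits ?\<alpha> (X \<union> Y))) (Pos z)
        \<or> up_lit (restrict F (assign_lits ?\<alpha> (X \<union> Y))) (Neg z)"
      using Z_forced that by blast
    then have "Pos (Old z) \<in> ?K \<or> Neg (Old z) \<in> ?K"
      using up_lit_Old_propagated by fastforce
    then show ?thesis
      by force
  qed
  have "\<exists>k\<in>\<gamma>. lit_true ?\<alpha> k" if \<gamma>: "\<gamma> \<in> F" for \<gamma>
  proof (rule ccontr)
    assume "\<not> (\<exists>k\<in>\<gamma>. lit_true ?\<alpha> k)"
    then have "\<forall>k\<in>\<gamma>. map_lit Old k \<notin> ?K"
      using lit_true_old_assignment[OF K] by blast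
    then obtain k where "var k \<in> Z" "Old (var k) \<notin> var ` ?K"
      using residual_Z_literals[OF \<gamma>] by (metis insertI1)
    with Z_assigned show False
      by blast
  qed
  then show ?thesis
    unfolding satisfiable_def by blast
qed

end

end

section \<open>Minimum search trees of $c_X(F)$\<close>

locale cX_setting = cX_base +
  assumes unsat: "\<not> satisfiable F"
begin

lemma branch_var_exists:
  assumes "admissible J" "\<not> refuted (restrict H J)"
  obtains b where "b \<in> Old ` (X \<union> Y)" "b \<in> Var (U (restrict H J))"
proof (cases "unassigned J = {}")
  case True
  then show ?thesis
    using that satisfiable_if_no_branch_var[OF assms(1) True assms(2)] unsat by blast
next
  case False
  then obtain x where x: "x \<in> unassigned J"
    by blast
  then have "x \<in> X"
    unfolding unassigned_def by blast
  with x show ?thesis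
    using that unassigned_in_Var_U[OF assms(1)] by blast
qed

lemma restrict_child:
  assumes "admissible J" "var l \<in> Old ` (X \<union> Y)" "var l \<notin> var ` J"
  shows "restrict (restrict H J) {l} = restrict H (insert l J)" and "admissible (insert l J)"
  using assms by (simp_all add: restrict_insert admissible_insert)

lemma card_branch_vars_child:
  assumes J: "admissible J" and nr: "\<not> refuted (restrict H J)"
    and l: "var l \<in> Old ` (X \<union> Y)" "var l \<in> Var (U (restrict H J))"
    and nr_l: "\<not> refuted (restrict H (insert l J))"
  shows "card (Old ` (X \<union> Y) \<inter> Var (U (restrict H (insert l J))))
    < card (Old ` (X \<union> Y) \<inter> Var (U (restrict H J)))"
proof -
  let ?Bv = "Old ` (X \<union> Y)" and ?G = "restrict H J"
  have fin: "finite_cnf ?G"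
    by (rule finite_cnf_restrict[OF finite_cnf_H])
  have "var l \<notin> var ` J"
    using l(2) Var_U_restrict[OF finite_cnf_H, of J] by blast
  then have child: "restrict ?G {l} = restrict H (insert l J)"
    using restrict_child[OF J l(1)] by blast
  then have "Var (U (restrict H (insert l J))) \<subseteq> Var (U ?G) - {var l}"
    using Var_U_child[OF fin nr l(2)] nr_l by simp
  with l have "?Bv \<inter> Var (U (restrict H (insert l J))) \<subset> ?Bv \<inter> Var (U ?G)"
    by auto
  moreover have "finite (Var (U ?G))"
    by (rule finite_Var[OF finite_cnf_U[OF fin]])
  ultimately show ?thesis
    by (meson finite_Int psubset_card_mono)
qed

lemma is_dmst_exists: "admissible J \<Longrightarrow> \<exists>T. is_dmst (Old ` (X \<union> Y)) (restrict H J) T"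
proof (induction "card (Old ` (X \<union> Y) \<inter> Var (U (restrict H J)))" arbitrary: J rule: less_induct)
  case less
  let ?Bv = "Old ` (X \<union> Y)" and ?G = "restrict H J"
  have fin: "finite_cnf ?G"
    by (rule finite_cnf_restrict[OF finite_cnf_H])
  show ?case
  proof (cases "refuted ?G")
    case True
    then show ?thesis
      using is_dmst_E_iff[OF fin] by blast
  next
    case nr: False
    obtain b where b: "b \<in> ?Bv" "b \<in> Var (U ?G)"
      using branch_var_exists[OF less.prems nr] by blast
    have b_J: "b \<notin> var ` J"
      using b(2) Var_U_restrict[OF finite_cnf_H, of J] by blast
    have "\<exists>T. is_dmst ?Bv (restrict ?G {l}) T" if l: "var l = b" for l
    proof -
      note child = restrict_child[OF less.prems, of l]
      show ?thesis
      proof (cases "refuted (restrict H (insert l J))")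
        case True
        then have "is_dmst ?Bv (restrict H (insert l J)) E"
          using is_dmst_E_iff[OF finite_cnf_restrict[OF finite_cnf_H]] by simp
        with child l b(1) b_J show ?thesis
          by auto
      next
        case False
        then show ?thesis
          using less.hyps[of "insert l J"] card_branch_vars_child[OF less.prems nr _ _ False]
            child l b b_J by simp
      qed
    qed
    then obtain T1 T2 where "is_dmst ?Bv (restrict ?G {Neg b}) T1" "is_dmst ?Bv (restrict ?G {Pos b}) T2"
      by (metis var.simps)
    with nr b have "is_dmst ?Bv ?G (N b T1 T2)"
      by (simp add: is_dmst_N_iff[OF fin])
    then show ?thesis ..
  qed
qed

definition min_tree :: "'a ext lit set \<Rightarrow> 'a ext btree" where
  "min_tree J = (SOME T. min_dmst (Old ` (X \<union> Y)) (restrict H J) T)"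

lemma min_dmst_min_tree: "admissible J \<Longrightarrow> min_dmst (Old ` (X \<union> Y)) (restrict H J) (min_tree J)"
  unfolding min_tree_def using is_dmst_exists min_dmst_exists by (metis someI_ex)

lemma labels_min_tree:
  assumes "admissible J" "unassigned J = {}"
  shows "labels (min_tree J) \<subseteq> Old ` Y"
proof -
  have "labels (min_tree J) \<subseteq> Old ` (X \<union> Y) \<inter> Var (restrict H J)"
    using labels_dmst finite_cnf_restrict[OF finite_cnf_H] min_dmst_min_tree[OF assms(1)]
    unfolding min_dmst_def by blast
  moreover have "Old ` X \<subseteq> var ` J"
    using assms(2) unfolding unassigned_def by blast
  ultimately show ?thesis
    using Var_restrict[of H J] by blast
qed

lemma tsize_min_tree_branch:
  assumes J: "admissible J" and y: "y \<in> X \<union> Y" "Old y \<notin> var ` J"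
  shows "tsize (min_tree J)
    \<le> Suc (tsize (min_tree (insert (Neg (Old y)) J)) + tsize (min_tree (insert (Pos (Old y)) J)))"
proof -
  let ?Bv = "Old ` (X \<union> Y)" and ?G = "restrict H J"
  have fin: "finite_cnf ?G"
    by (rule finite_cnf_restrict[OF finite_cnf_H])
  have min: "tsize (min_tree J) \<le> tsize T" if "is_dmst ?Bv ?G T" for T
    using min_dmst_min_tree[OF J] that unfolding min_dmst_def by blast
  have child: "is_dmst ?Bv (restrict ?G {l}) (min_tree (insert l J))" if "var l = Old y" for l
    using restrict_child[OF J, of l] min_dmst_min_tree[of "insert l J"] that y
    unfolding min_dmst_def by simp
  consider (refuted) "refuted ?G" | (branch) "\<not> refuted ?G" "Old y \<in> Var (U ?G)"
    | (unused) "\<not> refuted ?G" "Old y \<notin> Var (U ?G)"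
    by blast
  then show ?thesis
  proof cases
    case refuted
    then have "tsize (min_tree J) \<le> tsize E"
      using min[of E] is_dmst_E_iff[OF fin] by simp
    then show ?thesis
      by simp
  next
    case branch
    with y(1) child have "is_dmst ?Bv ?G
        (N (Old y) (min_tree (insert (Neg (Old y)) J)) (min_tree (insert (Pos (Old y)) J)))"
      by (simp add: is_dmst_N_iff[OF fin])
    from min[OF this] show ?thesis
      by simp
  next
    case unused
    then obtain l where l: "var l = Old y" "up_equiv ?G (restrict ?G {l})"
      using up_equiv_restrict_unused[OF fin] by blast
    have "is_dmst ?Bv ?G (min_tree (insert l J))"
      by (rule is_dmst_up_equiv[OF finite_cnf_restrict[OF fin] fin up_equiv_sym[OF l(2)] child[OF l(1)]])
    then have "tsize (min_tree J) \<le> tsize (min_tree (insert l J))"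
      by (rule min)
    moreover have "l = Neg (Old y) \<or> l = Pos (Old y)"
      using l(1) by (auto simp: var_eq_conv)
    ultimately show ?thesis
      by auto
  qed
qed

abbreviation canonical_tree :: "'a ext lit set \<Rightarrow> 'a list \<Rightarrow> 'a ext btree" where
  "canonical_tree J xs \<equiv> complete_tree min_tree J (map Old xs)"

lemma assign_unassigned:
  assumes "admissible J" "x \<in> unassigned J" "var l = Old x"
  shows "restrict (restrict H J) {l} = restrict H (insert l J)" and "admissible (insert l J)"
    and "unassigned (insert l J) = unassigned J - {x}"
proof -
  have "var l \<in> Old ` (X \<union> Y)" "var l \<notin> var ` J"
    using assms(2,3) unfolding unassigned_def by auto
  then show "restrict (restrict H J) {l} = restrict H (insert l J)" "admissible (insert l J)"
    using restrict_child[OF assms(1)] by blast+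
  show "unassigned (insert l J) = unassigned J - {x}"
    using assms(3) unfolding unassigned_insert by auto
qed

lemma tsize_canonical_tree_branch:
  assumes "admissible J" "distinct xs" "set xs = unassigned J" "y \<in> Y" "Old y \<notin> var ` J"
  shows "tsize (canonical_tree J xs) \<le> Suc (tsize (canonical_tree (insert (Neg (Old y)) J) xs)
    + tsize (canonical_tree (insert (Pos (Old y)) J) xs))"
  using assms
proof (induction xs arbitrary: J)
  case Nil
  then show ?case
    using tsize_min_tree_branch by simp
next
  case (Cons x xs)
  have x: "x \<in> unassigned J"
    using Cons.prems(3) by (metis list.set_intros(1))
  then have "Old x \<noteq> Old y"
    using Cons.prems(4) X_Y unfolding unassigned_def by auto
  have IH: "tsize (canonical_tree (insert l J) xs)
      \<le> Suc (tsize (canonical_tree (insert (Neg (Old y)) (insert l J)) xs)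
        + tsize (canonical_tree (insert (Pos (Old y)) (insert l J)) xs))"
    if l: "var l = Old x" for l
  proof (rule Cons.IH)
    show "admissible (insert l J)" "set xs = unassigned (insert l J)"
      using assign_unassigned[OF Cons.prems(1) x l] Cons.prems(2,3) by auto
    show "Old y \<notin> var ` insert l J"
      using Cons.prems(5) \<open>Old x \<noteq> Old y\<close> l by auto
  qed (use Cons.prems in auto)
  show ?case
    using IH[of "Neg (Old x)"] IH[of "Pos (Old x)"] by (simp add: insert_commute)
qed

lemma tsize_canonical_tree_le:
  assumes "admissible J" "distinct xs" "set xs = unassigned J"
    and "is_dmst (Old ` (X \<union> Y)) (restrict H J) T"
  shows "tsize (canonical_tree J xs) \<le> tsize T"
  using assms
proof (induction T arbitrary: J xs)
  case E
  then have "refuted (restrict H J)"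
    using is_dmst_E_iff[OF finite_cnf_restrict[OF finite_cnf_H]] by simp
  then have "xs = []"
    using not_refuted_partial[OF E.prems(1)] E.prems(3) by (cases xs) auto
  then show ?case
    using min_dmst_min_tree[OF E.prems(1)] E.prems(4) unfolding min_dmst_def by fastforce
next
  case (N b T1 T2)
  let ?Bv = "Old ` (X \<union> Y)" and ?G = "restrict H J"
  from N.prems(4) have b: "b \<in> ?Bv" "b \<in> Var (U ?G)"
    and T1: "is_dmst ?Bv (restrict ?G {Neg b}) T1" and T2: "is_dmst ?Bv (restrict ?G {Pos b}) T2"
    by (simp_all add: is_dmst_N_iff[OF finite_cnf_restrict[OF finite_cnf_H]])
  obtain w where w: "w \<in> X \<union> Y" "b = Old w"
    using b(1) by blast
  have w_J: "Old w \<notin> var ` J"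
    using b(2) w(2) Var_U_restrict[OF finite_cnf_H, of J] by blast
  have child: "restrict ?G {l} = restrict H (insert l J)" "admissible (insert l J)"
      "distinct (remove1 w xs)" "set (remove1 w xs) = unassigned (insert l J)"
    if "var l = Old w" for l
    using restrict_child[OF N.prems(1), of l] that w w_J N.prems(2,3)
    by (auto simp: unassigned_insert)
  have "tsize (canonical_tree (insert (Neg (Old w)) J) (remove1 w xs)) \<le> tsize T1"
    using N.IH(1) child[of "Neg (Old w)"] T1 w(2) by simp
  moreover have "tsize (canonical_tree (insert (Pos (Old w)) J) (remove1 w xs)) \<le> tsize T2"
    using N.IH(2) child[of "Pos (Old w)"] T2 w(2) by simp
  moreover have "tsize (canonical_tree J xs)
      \<le> Suc (tsize (canonical_tree (insert (Neg (Old w)) J) (remove1 w xs))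
        + tsize (canonical_tree (insert (Pos (Old w)) J) (remove1 w xs)))"
  proof (cases "w \<in> X")
    case True
    then have "w \<in> set xs"
      using N.prems(3) w_J unfolding unassigned_def by blast
    then have "tsize (canonical_tree J xs) = tsize (canonical_tree J (w # remove1 w xs))"
      using N.prems(2)
      by (intro tsize_complete_tree_perm) (auto simp: distinct_map inj_on_def set_remove1_eq)
    then show ?thesis
      by simp
  next
    case False
    with w(1) have "w \<in> Y" "remove1 w xs = xs"
      using N.prems(3) unfolding unassigned_def by (auto intro: remove1_idem)
    then show ?thesis
      using tsize_canonical_tree_branch[OF N.prems(1-3) _ w_J] by simp
  qed
  ultimately show ?case
    by simp
qed

lemma is_dmst_canonical_tree:
  assumes "admissible J" "distinct xs" "set xs = unassigned J"
  shows "is_dmst (Old ` (X \<union> Y)) (restrict H J) (canonical_tree J xs)"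
  using assms
proof (induction xs arbitrary: J)
  case Nil
  then show ?case
    using min_dmst_min_tree unfolding min_dmst_def by simp
next
  case (Cons x xs)
  have x: "x \<in> unassigned J"
    using Cons.prems(3) by (metis list.set_intros(1))
  have "is_dmst (Old ` (X \<union> Y)) (restrict (restrict H J) {l}) (canonical_tree (insert l J) xs)"
    if "var l = Old x" for l
    using Cons.IH assign_unassigned[OF Cons.prems(1) x that] Cons.prems(2,3) by auto
  moreover have "Old x \<in> Old ` (X \<union> Y)"
    using x unfolding unassigned_def by blast
  ultimately show ?case
    using not_refuted_partial[OF Cons.prems(1) x] unassigned_in_Var_U[OF Cons.prems(1) x]
    by (simp add: is_dmst_N_iff[OF finite_cnf_restrict[OF finite_cnf_H]])
qed

lemma complete_then_canonical_tree:
  assumes "admissible J" "distinct xs" "set xs = unassigned J"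
  shows "complete_then (Old ` set xs) (Old ` Y) (canonical_tree J xs)"
  using assms
proof (induction xs arbitrary: J)
  case Nil
  then show ?case
    using labels_min_tree by (simp add: ct_base)
next
  case (Cons x xs)
  have x: "x \<in> unassigned J"
    using Cons.prems(3) by (metis list.set_intros(1))
  have "complete_then (Old ` set xs) (Old ` Y) (canonical_tree (insert l J) xs)"
    if l: "var l = Old x" for l
  proof -
    note child = assign_unassigned[OF Cons.prems(1) x l]
    have "distinct xs" "set xs = unassigned (insert l J)"
      using child(3) Cons.prems(2,3) by auto
    then show ?thesis
      by (rule Cons.IH[OF child(2)])
  qed
  moreover have "Old ` set (x # xs) - {Old x} = Old ` set xs"
    using Cons.prems(2) by auto
  ultimately show ?case
    by (simp add: ct_node)
qed

end

theorem theorem5: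
  fixes F :: "'a cnf" and X Y Z :: "'a set" and n :: nat and xv :: "nat \<Rightarrow> 'a"
  assumes "finite F" and "\<forall>C\<in>F. finite C"
    and "Var F \<subseteq> X \<union> Y \<union> Z"
    and "X \<inter> Y = {}" and "X \<inter> Z = {}" and "Y \<inter> Z = {}"
    and "inj_on xv {1..n}" and "X = xv ` {1..n}"
    and "\<not> satisfiable F"
    and "\<forall>\<alpha>. \<forall>z\<in>Z. up_lit (restrict F (assign_lits \<alpha> (X \<union> Y))) (Pos z)
                   \<or> up_lit (restrict F (assign_lits \<alpha> (X \<union> Y))) (Neg z)"
  shows "\<exists>T. min_dmst (Old ` (X \<union> Y)) (cX F n xv) T \<and> complete_then (Old ` X) (Old ` Y) T"
proof -
  interpret cX_setting F X Y Z n xv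
    using assms by unfold_locales
  define xs where "xs = map xv [1..<Suc n]"
  have upt: "set [1..<Suc n] = {1..n}"
    by auto
  have xs: "distinct xs" "set xs = unassigned {}"
    using assms(7,8) unfolding xs_def unassigned_def distinct_map set_map upt by simp_all
  have J: "admissible {}"
    by (simp add: admissible_def consistent_def)
  let ?T = "canonical_tree {} xs"
  have "min_dmst (Old ` (X \<union> Y)) (cX F n xv) ?T"
    using is_dmst_canonical_tree[OF J xs] tsize_canonical_tree_le[OF J xs]
    unfolding min_dmst_def by simp
  moreover have "complete_then (Old ` X) (Old ` Y) ?T"
    using complete_then_canonical_tree[OF J xs] xs(2) unfolding unassigned_def by simp
  ultimately show ?thesis
    by blast
qed

end
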